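(* Let $n$ and $k$ be integers with $n\ge 1$. Then $$\mathfrak C_{2n}^{(k)}=\sum_{m=1}^{n}\frac{(-4)^{n-m}}{(2m+1)^k}\left[\!\!\left[n\atop m\right]\!\!\right],$$ where for $m=1,2,\dots,n$ $$\left[\!\!\left[n\atop m\right]\!\!\right]=\left[n\atop m\right]^2-2\left[n\atop m-1\right]\left[n\atop m+1\right]+2\left[n\atop m-2\right]\left[n\atop m+2\right]-\cdots+2(-1)^{m-1}\left[n\atop 1\right]\left[n\atop 2m-1\right],$$ that is, $\left[\!\!\left[n\atop m\right]\!\!\right]=\left[n\atop m\right]^2+2\sum_{j=1}^{m-1}(-1)^j\left[n\atop m-j\right]\left[n\atop m+j\right]$, and $\left[\!\!\left[n\atop 0\right]\!\!\right]=0$.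
   Context: For an integer $k$, the polylogarithm factorial function with level $2$ is ${\rm Lif}_{2,k}(z)=\sum_{m=0}^\infty\frac{z^{2m}}{(2m)!(2m+1)^k}$, and the poly-Cauchy numbers with level $2$, $\mathfrak C_n^{(k)}$, are defined by the generating function ${\rm Lif}_{2,k}({\rm arcsinh}\,t)=\sum_{n=0}^\infty\mathfrak C_n^{(k)}\frac{t^n}{n!}$, where ${\rm arcsinh}$ is the inverse hyperbolic sine. Here $\left[n\atop m\right]$ denotes the unsigned Stirling numbers of the first kind, defined by $x(x+1)\cdots(x+n-1)=\sum_{m=0}^n\left[n\atop m\right]x^m$, with $\left[n\atop m\right]=0$ for $m>n$. *)

theory Defs
  imports "HOL-Analysis.Analysis" "HOL-Combinatorics.Stirling"
begin

definition Lif2 :: "int \<Rightarrow> real \<Rightarrow> real" where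
  "Lif2 k z = (\<Sum>m. z ^ (2*m) / (fact (2*m) * (real (2*m+1)) powi k))"

text \<open>Poly-Cauchy numbers with level 2: n! times the n-th Taylor coefficient at 0
  of Lif2 k (arsinh t), i.e. the n-th derivative at 0.\<close>
definition polyCauchy2 :: "nat \<Rightarrow> int \<Rightarrow> real" where
  "polyCauchy2 n k = (deriv ^^ n) (\<lambda>t. Lif2 k (arsinh t)) 0"

definition dstirling :: "nat \<Rightarrow> nat \<Rightarrow> int" where
  "dstirling n m = (if m = 0 then 0 else
     int (stirling n m) ^ 2 +
     2 * (\<Sum>j=1..m-1. (-1) ^ j * int (stirling n (m-j)) * int (stirling n (m+j))))"

end

theory Submission
  imports Defs "HOL-Complex_Analysis.Complex_Analysis"
begin

(* Let F(w) = sum_m c_m w^(2m) / (2m)! with c_m = (2m+1)^(-k), so that F = Lif2 k, and let A be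
  the Taylor series of arsinh at 0. From (1 + z^2) A'^2 = 1 one gets (1 + z^2) A'' + z A' = 0,
  and the chain rule turns H = F o A into a solution of (1 + z^2) H'' + z H' = F'' o A, where F''
  is F with the coefficients shifted to c_(m+1). Comparing coefficients,
  H^(n+2)(0) = (F'' o A)^(n)(0) - n^2 H^(n)(0), hence H^(2n)(0) = sum_m a(n,m) c_m with
  a(n+1,m) = a(n,m-1) - 4 n^2 a(n,m), i.e. sum_m a(n,m) y^m = prod_(j<n) (y - 4 j^2).
  Substituting y = 4 x^2 turns this product into (-4)^n times the product of the rising
  factorials of x and of -x, whose coefficients are convolutions of unsigned Stirling numbers of
  the first kind; folding the convolution about its centre gives the double-bracket numbers.
  Analysis only enters to identify the derivatives of Lif2 k (arsinh t) at 0 with the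
  coefficients of F o A, through the complex arsinh, which is holomorphic near 0. *)

unbundle no vec_syntax

section \<open>Composition with a series satisfying the arsinh equation\<close>

definition even_fps :: "(nat \<Rightarrow> 'a::field_char_0) \<Rightarrow> 'a fps" where
  "even_fps c = Abs_fps (\<lambda>n. if even n then c (n div 2) / fact n else 0)"

lemma even_fps_nth: "even_fps c $ n = (if even n then c (n div 2) / fact n else 0)"
  by (simp add: even_fps_def)

lemma fps_deriv_fps_deriv_even_fps:
  "fps_deriv (fps_deriv (even_fps c)) = even_fps (\<lambda>m. c (Suc m))"
proof (rule fps_ext)
  fix n
  show "fps_deriv (fps_deriv (even_fps c)) $ n = even_fps (\<lambda>m. c (Suc m)) $ n"
  proof (cases "even n")
    case True
    then obtain j where j: "n = 2*j" by blast
    have "fact (2*j + 2) = (of_nat (2*j+1) * of_nat (2*j+2) * fact (2*j) :: 'a)"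
      by (simp add: algebra_simps)
    then show ?thesis using j
      by (simp add: even_fps_nth field_simps del: of_nat_Suc fact_Suc)
  qed (simp add: even_fps_nth)
qed

lemma arsinh_ode_fps_compose:
  fixes F A :: "'a::{idom, ring_char_0} fps"
  assumes A0: "A $ 0 = 0" and A': "(1 + fps_X^2) * fps_deriv A ^ 2 = 1"
  shows "(1 + fps_X^2) * fps_deriv (fps_deriv (F oo A)) + fps_X * fps_deriv (F oo A)
           = fps_deriv (fps_deriv F) oo A"
proof -
  define D where "D = fps_deriv A"
  have "D \<noteq> 0"
    using A' unfolding D_def by (metis mult_zero_right power_zero_numeral zero_neq_one)
  have "fps_deriv ((1 + fps_X^2) * D^2) = 0"
    using A' by (simp add: D_def)
  then have "2 * D * ((1 + fps_X^2) * fps_deriv D + fps_X * D) = 0"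
    by (simp add: fps_deriv_power power2_eq_square algebra_simps)
  with \<open>D \<noteq> 0\<close> have D': "(1 + fps_X^2) * fps_deriv D + fps_X * D = 0"
    by simp
  have "fps_deriv (F oo A) = (fps_deriv F oo A) * D"
    using A0 by (simp add: fps_compose_deriv D_def)
  moreover have "fps_deriv (fps_deriv F oo A) = (fps_deriv (fps_deriv F) oo A) * D"
    using A0 by (simp add: fps_compose_deriv D_def)
  ultimately have "(1 + fps_X^2) * fps_deriv (fps_deriv (F oo A)) + fps_X * fps_deriv (F oo A)
      = (fps_deriv (fps_deriv F) oo A) * ((1 + fps_X^2) * D^2)
        + (fps_deriv F oo A) * ((1 + fps_X^2) * fps_deriv D + fps_X * D)"
    by (simp add: power2_eq_square algebra_simps)
  then show ?thesis
    using A' D' by (simp add: D_def)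
qed

lemma fps_nth_arsinh_ode:
  fixes H K :: "'a::comm_ring_1 fps"
  assumes "(1 + fps_X^2) * fps_deriv (fps_deriv H) + fps_X * fps_deriv H = K"
  shows "of_nat ((n+1) * (n+2)) * H $ (n+2) + of_nat (n^2) * H $ n = K $ n"
proof -
  have "K $ n = ((1 + fps_X^2) * fps_deriv (fps_deriv H) + fps_X * fps_deriv H) $ n"
    using assms by simp
  also have "\<dots> = of_nat ((n+1) * (n+2)) * H $ (n+2) + of_nat (n^2) * H $ n"
    by (cases n; cases "n - 1")
       (simp_all add: distrib_right fps_X_power_mult_nth power2_eq_square algebra_simps)
  finally show ?thesis ..
qed

(* The (2n)-th derivative at 0 of F(arsinh z), for even F, is sum_m arsinh_coeff n m * F^(2m)(0). *)
fun arsinh_coeff :: "nat \<Rightarrow> nat \<Rightarrow> int" where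
  "arsinh_coeff 0 m = (if m = 0 then 1 else 0)"
| "arsinh_coeff (Suc n) m =
     (if m = 0 then 0 else arsinh_coeff n (m - 1)) - 4 * int n ^ 2 * arsinh_coeff n m"

lemma arsinh_coeff_eq_0: "n < m \<Longrightarrow> arsinh_coeff n m = 0"
  by (induction n arbitrary: m) auto

lemma fact_mult_nth_even_fps_compose:
  fixes A :: "'a::field_char_0 fps"
  assumes "A $ 0 = 0" "(1 + fps_X^2) * fps_deriv A ^ 2 = 1"
  shows "fact (2*n) * (even_fps c oo A) $ (2*n) = (\<Sum>m\<le>n. of_int (arsinh_coeff n m) * c m)"
proof (induction n arbitrary: c)
  case 0
  then show ?case
    by (simp add: even_fps_nth)
next
  case (Suc n)
  define H where "H = even_fps c oo A"
  define K where "K = even_fps (\<lambda>m. c (Suc m)) oo A"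
  have ode: "of_nat ((2*n + 1) * (2*n + 2)) * H $ (2*n + 2) + of_nat ((2*n)^2) * H $ (2*n) = K $ (2*n)"
    unfolding H_def K_def
    by (rule fps_nth_arsinh_ode[OF arsinh_ode_fps_compose[OF assms, where F = "even_fps c"],
          unfolded fps_deriv_fps_deriv_even_fps])
  have "fact (2 * Suc n) * H $ (2 * Suc n) =
      fact (2*n) * (of_nat ((2*n + 1) * (2*n + 2)) * H $ (2*n + 2))"
    by (simp add: algebra_simps)
  also have "of_nat ((2*n + 1) * (2*n + 2)) * H $ (2*n + 2) = K $ (2*n) - of_nat ((2*n)^2) * H $ (2*n)"
    using ode by (simp only: eq_diff_eq)
  also have "fact (2*n) * (K $ (2*n) - of_nat ((2*n)^2) * H $ (2*n)) =
      fact (2*n) * K $ (2*n) - of_nat (4 * n^2) * (fact (2*n) * H $ (2*n))"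
    by (simp add: algebra_simps power_mult_distrib)
  also have "\<dots> = (\<Sum>m\<le>n. of_int (arsinh_coeff n m) * c (Suc m))
      - of_nat (4 * n^2) * (\<Sum>m\<le>n. of_int (arsinh_coeff n m) * c m)"
    unfolding H_def K_def Suc.IH ..
  also have "\<dots> = (\<Sum>m\<le>Suc n. of_int (arsinh_coeff (Suc n) m) * c m)"
  proof -
    have "(\<Sum>m\<le>Suc n. of_int (arsinh_coeff (Suc n) m) * c m) =
        (\<Sum>m\<le>Suc n. of_int (if m = 0 then 0 else arsinh_coeff n (m - 1)) * c m)
        - of_int (4 * int n ^ 2) * (\<Sum>m\<le>Suc n. of_int (arsinh_coeff n m) * c m)"
      by (simp add: sum_distrib_left sum_subtractf algebra_simps)
    also have "(\<Sum>m\<le>Suc n. of_int (if m = 0 then 0 else arsinh_coeff n (m - 1)) * c m) =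
        (\<Sum>m\<le>n. of_int (arsinh_coeff n m) * c (Suc m))"
      by (subst sum.atMost_Suc_shift) simp
    also have "(\<Sum>m\<le>Suc n. of_int (arsinh_coeff n m) * c m) =
        (\<Sum>m\<le>n. of_int (arsinh_coeff n m) * c m)"
      by (simp add: arsinh_coeff_eq_0)
    finally show ?thesis
      by simp
  qed
  finally show ?case
    by (simp add: H_def)
qed

section \<open>The coefficients as Stirling numbers\<close>

lemma coeff_pochhammer_linear:
  "coeff (pochhammer [:0, a:] n) j = a ^ j * of_nat (stirling n j)"
proof -
  have "pochhammer [:0, a:] n = (\<Sum>i\<le>n. of_nat (stirling n i) * monom a 1 ^ i)"
    by (simp add: stirling_pochhammer monom_altdef)
  also have "\<dots> = (\<Sum>i\<le>n. monom (a ^ i * of_nat (stirling n i)) i)"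
    by (intro sum.cong refl) (simp add: monom_power of_nat_poly smult_monom mult.commute)
  finally show ?thesis
    by (cases "j \<le> n") (auto simp: coeff_sum)
qed

definition sym_pochhammer :: "nat \<Rightarrow> int poly" where
  "sym_pochhammer n = pochhammer [:0, 1:] n * pochhammer [:0, -1:] n"

lemma sym_pochhammer_Suc:
  "sym_pochhammer (Suc n) = sym_pochhammer n * [:int n ^ 2, 0, -1:]"
proof -
  have "([:0, 1:] + of_nat n) * ([:0, -1:] + of_nat n) = ([:int n ^ 2, 0, -1:] :: int poly)"
    by (simp add: of_nat_poly power2_eq_square algebra_simps)
  then show ?thesis
    unfolding sym_pochhammer_def pochhammer_Suc by (simp only: mult_ac)
qed

lemma coeff_sym_pochhammer_Suc:
  "coeff (sym_pochhammer (Suc n)) p =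
     int n ^ 2 * coeff (sym_pochhammer n) p - (if p < 2 then 0 else coeff (sym_pochhammer n) (p - 2))"
proof -
  have "sym_pochhammer n * [:int n ^ 2, 0, -1:] =
      smult (int n ^ 2) (sym_pochhammer n) - pCons 0 (pCons 0 (sym_pochhammer n))"
    by (simp add: mult_pCons_right algebra_simps)
  then show ?thesis
    unfolding sym_pochhammer_Suc by (cases p; cases "p - 1") (auto simp: coeff_pCons)
qed

lemma coeff_sym_pochhammer:
  "coeff (sym_pochhammer n) p =
     (\<Sum>i\<le>p. (-1) ^ (p - i) * int (stirling n i) * int (stirling n (p - i)))"
  by (simp add: sym_pochhammer_def coeff_mult coeff_pochhammer_linear mult_ac)

lemma arsinh_coeff_sym_pochhammer:
  "4 ^ m * arsinh_coeff n m = (-4) ^ n * coeff (sym_pochhammer n) (2*m)"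
proof (induction n arbitrary: m)
  case 0
  then show ?case by (simp add: sym_pochhammer_def)
next
  case (Suc n)
  show ?case
  proof (cases m)
    case 0
    then show ?thesis using Suc[of 0] by (simp add: coeff_sym_pochhammer_Suc)
  next
    case (Suc m')
    have "4 ^ m * arsinh_coeff (Suc n) m =
        4 * (4 ^ m' * arsinh_coeff n m') - 4 * int n ^ 2 * (4 ^ m * arsinh_coeff n m)"
      using Suc by (simp add: algebra_simps)
    also have "\<dots> = (-4) ^ Suc n * coeff (sym_pochhammer (Suc n)) (2*m)"
      unfolding Suc.IH using Suc by (simp add: coeff_sym_pochhammer_Suc algebra_simps)
    finally show ?thesis .
  qed
qed

lemma sum_atMost_double_centered:
  fixes g :: "nat \<Rightarrow> 'a::comm_monoid_add"
  shows "(\<Sum>i\<le>2*m. g i) = g m + (\<Sum>j=1..m. g (m - j) + g (m + j))"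
proof -
  have "(\<Sum>i\<le>2*m. g i) = sum g ({..<m} \<union> {m..2*m})"
    by (rule sum.cong) auto
  also have "\<dots> = (\<Sum>i<m. g i) + (g m + (\<Sum>i=Suc m..2*m. g i))"
    by (simp add: sum.union_disjoint ivl_disj_int sum.atLeast_Suc_atMost)
  also have "(\<Sum>i<m. g i) = (\<Sum>j=1..m. g (m - j))"
    by (rule sum.reindex_bij_witness[of _ "\<lambda>i. m - i" "\<lambda>j. m - j"]) auto
  also have "(\<Sum>i=Suc m..2*m. g i) = (\<Sum>j=1..m. g (m + j))"
    by (rule sum.reindex_bij_witness[of _ "\<lambda>j. m + j" "\<lambda>i. i - m"]) auto
  finally show ?thesis by (simp add: sum.distrib add_ac)
qed

lemma coeff_sym_pochhammer_even:
  assumes "n \<ge> 1"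
  shows "coeff (sym_pochhammer n) (2*m) = (-1) ^ m * dstirling n m"
proof -
  define s where "s i = int (stirling n i)" for i
  have "s 0 = 0"
    using assms by (simp add: s_def)
  have "coeff (sym_pochhammer n) (2*m) = (\<Sum>i\<le>2*m. (-1) ^ (2*m - i) * s i * s (2*m - i))"
    by (simp add: coeff_sym_pochhammer s_def)
  also have "\<dots> = (-1) ^ m * s m ^ 2 + (\<Sum>j=1..m. 2 * ((-1) ^ m * (-1) ^ j * s (m - j) * s (m + j)))"
    unfolding sum_atMost_double_centered
  proof (intro arg_cong2[where f = "(+)"] sum.cong refl)
    fix j assume "j \<in> {1..m}"
    then have "2*m - (m - j) = m + j" "2*m - (m + j) = m - j"
      and "(-1::int) ^ (m - j) = (-1) ^ m * (-1) ^ j"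
      by (auto simp flip: neg_one_power_add_eq_neg_one_power_diff simp: power_add)
    then show "(-1) ^ (2*m - (m - j)) * s (m - j) * s (2*m - (m - j))
        + (-1) ^ (2*m - (m + j)) * s (m + j) * s (2*m - (m + j))
        = 2 * ((-1) ^ m * (-1) ^ j * s (m - j) * s (m + j))"
      by (simp add: power_add algebra_simps)
  qed (simp add: power2_eq_square)
  also have "\<dots> = (-1) ^ m * dstirling n m"
  proof (cases m)
    case (Suc m')
    then show ?thesis
      using \<open>s 0 = 0\<close> by (simp add: dstirling_def s_def sum_distrib_left algebra_simps)
  qed (simp add: dstirling_def \<open>s 0 = 0\<close>)
  finally show ?thesis .
qed

lemma arsinh_coeff_eq_dstirling:
  assumes "n \<ge> 1" "m \<le> n"
  shows "arsinh_coeff n m = (-4) ^ (n - m) * dstirling n m"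
proof -
  have "(-4::int) ^ n * (-1) ^ m = (-4) ^ (n - m) * ((-4) ^ m * (-1) ^ m)"
    using assms by (simp add: mult_ac flip: power_add)
  also have "(-4::int) ^ m * (-1) ^ m = 4 ^ m"
    by (simp flip: power_mult_distrib)
  finally have sign: "(-4::int) ^ n * (-1) ^ m = 4 ^ m * (-4) ^ (n - m)"
    by simp
  have "4 ^ m * arsinh_coeff n m = (-4) ^ n * (-1) ^ m * dstirling n m"
    using arsinh_coeff_sym_pochhammer[of m n] coeff_sym_pochhammer_even[OF assms(1), of m]
    by simp
  also have "\<dots> = 4 ^ m * ((-4) ^ (n - m) * dstirling n m)"
    unfolding sign by simp
  finally show ?thesis
    by simp
qed

section \<open>The complex arsinh near 0\<close>

lemma arsinh_complex_eq: "arsinh z = Ln (z + csqrt (z^2 + 1))"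
  by (simp add: arsinh_def csqrt_conv_powr)

lemma has_field_derivative_arsinh_complex:
  fixes z :: complex
  assumes "z^2 + 1 \<notin> \<real>\<^sub>\<le>\<^sub>0" "z + csqrt (z^2 + 1) \<notin> \<real>\<^sub>\<le>\<^sub>0"
  shows "(arsinh has_field_derivative 1 / csqrt (z^2 + 1)) (at z)"
proof -
  have "csqrt (z^2 + 1) \<noteq> 0" "z + csqrt (z^2 + 1) \<noteq> 0"
    using assms by auto
  then have "((\<lambda>z. Ln (z + csqrt (z^2 + 1))) has_field_derivative 1 / csqrt (z^2 + 1)) (at z)"
    using assms by (auto intro!: derivative_eq_intros simp: field_simps)
  then show ?thesis
    by (simp add: arsinh_complex_eq [abs_def])
qed

lemma eventually_arsinh_regular:
  "\<forall>\<^sub>F z in nhds (0::complex). z^2 + 1 \<notin> \<real>\<^sub>\<le>\<^sub>0 \<and> z + csqrt (z^2 + 1) \<notin> \<real>\<^sub>\<le>\<^sub>0"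
proof -
  have "isCont (\<lambda>z::complex. csqrt (z^2 + 1)) 0"
    by (intro isCont_csqrt') (auto intro!: continuous_intros)
  then have "((\<lambda>z::complex. z^2 + 1) \<longlongrightarrow> 1) (at 0)" "((\<lambda>z::complex. z + csqrt (z^2 + 1)) \<longlongrightarrow> 1) (at 0)"
    by (auto intro!: tendsto_eq_intros simp: isCont_def)
  then have "\<forall>\<^sub>F z in at 0. 0 < Re (z^2 + 1)" "\<forall>\<^sub>F z in at 0. 0 < Re (z + csqrt (z^2 + 1))"
    by (auto dest!: tendsto_Re intro: order_tendstoD(1))
  then have "\<forall>\<^sub>F z in nhds 0. 0 < Re (z^2 + 1) \<and> 0 < Re (z + csqrt (z^2 + 1))"
    by (simp add: eventually_nhds_conv_at eventually_conj_iff)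
  then show ?thesis
    by eventually_elim (auto simp: complex_nonpos_Reals_iff)
qed

lemma arsinh_complex_of_real: "arsinh (complex_of_real x) = complex_of_real (arsinh x)"
proof -
  have "complex_of_real x ^ 2 + 1 = complex_of_real (x^2 + 1)"
    by simp
  then have "csqrt (complex_of_real x ^ 2 + 1) = complex_of_real (sqrt (x^2 + 1))"
    by (simp only: csqrt_of_real) simp
  then have "arsinh (complex_of_real x) = Ln (complex_of_real (x + sqrt (x^2 + 1)))"
    by (simp add: arsinh_complex_eq)
  also have "\<dots> = complex_of_real (arsinh x)"
    unfolding arsinh_real_def by (rule Ln_of_real[OF arsinh_real_aux])
  finally show ?thesis .
qed

lemma arsinh_has_fps_expansion:
  "(arsinh :: complex \<Rightarrow> complex) has_fps_expansion fps_expansion arsinh 0"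
proof -
  obtain U where "open U" "0 \<in> U"
    and U: "\<And>z. z \<in> U \<Longrightarrow> z^2 + 1 \<notin> \<real>\<^sub>\<le>\<^sub>0 \<and> z + csqrt (z^2 + 1) \<notin> \<real>\<^sub>\<le>\<^sub>0"
    using eventually_arsinh_regular unfolding eventually_nhds by blast
  then have "arsinh holomorphic_on U"
    by (subst holomorphic_on_open) (auto intro: has_field_derivative_arsinh_complex)
  with \<open>open U\<close> \<open>0 \<in> U\<close> show ?thesis
    by (intro has_fps_expansion_fps_expansion)
qed

lemma fps_expansion_arsinh_nth_0: "fps_expansion (arsinh :: complex \<Rightarrow> complex) 0 $ 0 = 0"
  using has_fps_expansion_imp_0_eq_fps_nth_0[OF arsinh_has_fps_expansion] by simp

lemma fps_expansion_arsinh_deriv: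
  "(1 + fps_X^2) * fps_deriv (fps_expansion (arsinh :: complex \<Rightarrow> complex) 0) ^ 2 = 1"
proof -
  have "(\<lambda>z. (1 + z^2) * deriv arsinh z ^ 2) has_fps_expansion
      (1 + fps_X^2) * fps_deriv (fps_expansion (arsinh :: complex \<Rightarrow> complex) 0) ^ 2"
    by (intro fps_expansion_intros arsinh_has_fps_expansion)
  moreover have ev: "\<forall>\<^sub>F z in nhds 0. (1 + z^2) * deriv arsinh z ^ 2 = (1::complex)"
    using eventually_arsinh_regular
  proof eventually_elim
    case (elim z)
    then have "deriv arsinh z = 1 / csqrt (z^2 + 1)" "z^2 + 1 \<noteq> 0"
      by (auto intro: DERIV_imp_deriv has_field_derivative_arsinh_complex)
    then show ?case
      by (simp add: power_divide)
  qed
  ultimately have "(\<lambda>z. 1) has_fps_expansion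
      (1 + fps_X^2) * fps_deriv (fps_expansion (arsinh :: complex \<Rightarrow> complex) 0) ^ 2"
    using has_fps_expansion_cong[OF ev refl] by blast
  then show ?thesis
    using has_fps_expansion_const[of 1] fps_expansion_unique_complex by simp
qed

section \<open>The power series of Lif2 k (arsinh t)\<close>

lemma fps_conv_radius_even_fps_eq_inf:
  fixes c :: "nat \<Rightarrow> 'a::{real_normed_field, banach}"
  assumes "K \<ge> 1" and bound: "\<And>m. norm (c m) \<le> K ^ m"
  shows "fps_conv_radius (even_fps c) = \<infinity>"
  unfolding fps_conv_radius_def
proof (rule conv_radius_inftyI'')
  fix z :: 'a
  have bound_n: "norm (even_fps c $ n * z ^ n) \<le> (K * norm z) ^ n / fact n" for n
  proof (cases "even n")
    case True
    then obtain m where n: "n = 2*m"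
      by blast
    have "norm (even_fps c $ n * z ^ n) = norm (c m) * norm z ^ n / fact n"
      using n by (simp add: even_fps_nth norm_mult norm_divide norm_power)
    also have "\<dots> \<le> K ^ n * norm z ^ n / fact n"
      using bound[of m] power_increasing[of m n K] n \<open>K \<ge> 1\<close>
      by (intro divide_right_mono mult_right_mono) auto
    finally show ?thesis
      by (simp add: power_mult_distrib)
  qed (use \<open>K \<ge> 1\<close> in \<open>simp add: even_fps_nth\<close>)
  have "summable (\<lambda>n. (K * norm z) ^ n / fact n)"
    using summable_exp[of "K * norm z"] by (simp add: field_simps)
  then show "summable (\<lambda>n. even_fps c $ n * z ^ n)"
    by (rule summable_comparison_test') (rule bound_n)
qed

definition Lif2_fps :: "int \<Rightarrow> complex fps" where
  "Lif2_fps k = even_fps (\<lambda>m. complex_of_real (1 / real (2*m + 1) powi k))"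

lemma abs_inverse_power_int_le:
  fixes x :: real
  assumes "x \<ge> 1"
  shows "\<bar>1 / x powi k\<bar> \<le> x ^ nat \<bar>k\<bar>"
proof (cases "k \<ge> 0")
  case True
  then have "\<bar>1 / x powi k\<bar> \<le> 1"
    using assms by (simp add: power_int_def one_le_power)
  also have "1 \<le> x ^ nat \<bar>k\<bar>"
    using assms by (rule one_le_power)
  finally show ?thesis .
next
  case False
  then show ?thesis
    using assms by (simp add: power_int_def power_inverse divide_inverse)
qed

lemma fps_conv_radius_Lif2_fps: "fps_conv_radius (Lif2_fps k) = \<infinity>"
  unfolding Lif2_fps_def
proof (rule fps_conv_radius_even_fps_eq_inf[of "3 ^ nat \<bar>k\<bar>"])
  fix m
  have "real (2*m + 1) \<le> 3 ^ m"
    by (induction m) auto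
  have "\<bar>1 / real (2*m + 1) powi k\<bar> \<le> real (2*m + 1) ^ nat \<bar>k\<bar>"
    by (rule abs_inverse_power_int_le) simp
  also have "\<dots> \<le> (3 ^ m) ^ nat \<bar>k\<bar>"
    by (rule power_mono) (use \<open>real (2*m + 1) \<le> 3 ^ m\<close> in auto)
  finally show "norm (complex_of_real (1 / real (2*m + 1) powi k)) \<le> (3 ^ nat \<bar>k\<bar>) ^ m"
    unfolding norm_of_real by (simp add: mult.commute flip: power_mult)
qed simp

lemma eval_fps_Lif2_fps_of_real:
  "eval_fps (Lif2_fps k) (complex_of_real y) = complex_of_real (Lif2 k y)"
proof -
  define b where "b n = (if even n then y ^ n / (fact n * real (n + 1) powi k) else 0)" for n
  have b: "Lif2_fps k $ n * complex_of_real y ^ n = complex_of_real (b n)" for n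
    by (cases "even n") (auto simp: Lif2_fps_def even_fps_nth b_def field_simps)
  have "summable (\<lambda>n. Lif2_fps k $ n * complex_of_real y ^ n)"
    using fps_conv_radius_Lif2_fps[of k] unfolding fps_conv_radius_def
    by (intro summable_in_conv_radius) simp
  then have "summable b"
    by (simp add: b summable_of_real_iff)
  then have "eval_fps (Lif2_fps k) (complex_of_real y) = complex_of_real (suminf b)"
    by (simp add: eval_fps_def b suminf_of_real)
  moreover have "(\<lambda>m. b (2*m)) sums suminf b \<longleftrightarrow> b sums suminf b"
    by (rule sums_mono_reindex) (auto simp: strict_mono_def b_def image_def elim!: oddE)
  then have "(\<lambda>m. b (2*m)) sums suminf b"
    using \<open>summable b\<close> by (simp add: summable_sums)
  then have "Lif2 k y = suminf b"
    by (simp add: Lif2_def b_def sums_iff algebra_simps)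
  ultimately show ?thesis
    by simp
qed

lemma higher_deriv_complex_of_real:
  fixes f :: "real \<Rightarrow> real" and g :: "complex \<Rightarrow> complex"
  assumes "g holomorphic_on S" "open S"
    and "\<And>y. complex_of_real y \<in> S \<Longrightarrow> g (complex_of_real y) = complex_of_real (f y)"
    and "complex_of_real x \<in> S"
  shows "(deriv ^^ n) g (complex_of_real x) = complex_of_real ((deriv ^^ n) f x)"
  using assms(4)
proof (induction n arbitrary: x)
  case 0
  then show ?case
    using assms(3) by simp
next
  case (Suc n x)
  define T where "T = complex_of_real -` S"
  have "open T"
    unfolding T_def using \<open>open S\<close> by (intro open_vimage) (auto intro: continuous_intros)
  define d where "d = deriv ((deriv ^^ n) g) (complex_of_real x)"
  have "((deriv ^^ n) g has_field_derivative d) (at (complex_of_real x))"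
    unfolding d_def using assms(1,2) Suc.prems
    by (intro holomorphic_derivI[of _ S] holomorphic_higher_deriv)
  then have "((\<lambda>y. (deriv ^^ n) g (complex_of_real y)) has_vector_derivative d) (at x)"
    by (rule has_vector_derivative_real_field)
  then have "((\<lambda>y. complex_of_real ((deriv ^^ n) f y)) has_vector_derivative d) (at x)"
    by (rule has_vector_derivative_transform_within_open[OF _ \<open>open T\<close>])
       (use Suc in \<open>auto simp: T_def\<close>)
  then have "((deriv ^^ n) f has_field_derivative Re d) (at x)"
    and "((\<lambda>y. 0) has_field_derivative Im d) (at x)"
    by (auto dest: has_field_derivative_Re has_field_derivative_Im)
  then have "deriv ((deriv ^^ n) f) x = Re d" "Im d = 0"
    by (auto intro: DERIV_imp_deriv DERIV_unique[OF _ DERIV_const])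
  then show ?case
    by (simp add: d_def complex_eq_iff)
qed

lemma polyCauchy2_eq_fps_nth:
  "complex_of_real (polyCauchy2 n k) = fact n * (Lif2_fps k oo fps_expansion arsinh 0) $ n"
proof -
  define g where "g = eval_fps (Lif2_fps k) \<circ> arsinh"
  have g: "g has_fps_expansion (Lif2_fps k oo fps_expansion arsinh 0)"
    unfolding g_def
    by (intro has_fps_expansion_compose eval_fps_has_fps_expansion arsinh_has_fps_expansion)
       (simp_all add: fps_conv_radius_Lif2_fps fps_expansion_arsinh_nth_0)
  then obtain S where S: "open S" "0 \<in> S" "g holomorphic_on S"
    by (rule has_fps_expansion_imp_holomorphic)
  have real: "g (complex_of_real y) = complex_of_real (Lif2 k (arsinh y))" for y
    by (simp add: g_def arsinh_complex_of_real eval_fps_Lif2_fps_of_real)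
  have "(deriv ^^ n) g (complex_of_real 0) = complex_of_real ((deriv ^^ n) (\<lambda>t. Lif2 k (arsinh t)) 0)"
    by (rule higher_deriv_complex_of_real[OF S(3,1) real]) (simp add: S(2))
  then have "(deriv ^^ n) g 0 = complex_of_real (polyCauchy2 n k)"
    unfolding polyCauchy2_def of_real_0 .
  then have "(Lif2_fps k oo fps_expansion arsinh 0) $ n = complex_of_real (polyCauchy2 n k) / fact n"
    using fps_nth_fps_expansion[OF g, of n] by (simp only:)
  then show ?thesis
    by simp
qed

theorem theorem1:
  fixes n :: nat and k :: int
  assumes "n \<ge> 1"
  shows "polyCauchy2 (2*n) k =
    (\<Sum>m=1..n. (-4) ^ (n-m) / (real (2*m+1)) powi k * real_of_int (dstirling n m))"
proof -
  have "complex_of_real (polyCauchy2 (2*n) k) =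
      (\<Sum>m\<le>n. of_int (arsinh_coeff n m) * complex_of_real (1 / real (2*m + 1) powi k))"
    unfolding polyCauchy2_eq_fps_nth Lif2_fps_def
    by (rule fact_mult_nth_even_fps_compose[OF fps_expansion_arsinh_nth_0 fps_expansion_arsinh_deriv])
  also have "\<dots> = complex_of_real (\<Sum>m\<le>n. arsinh_coeff n m / real (2*m + 1) powi k)"
    by simp
  finally have "polyCauchy2 (2*n) k = (\<Sum>m\<le>n. arsinh_coeff n m / real (2*m + 1) powi k)"
    by (simp only: of_real_eq_iff)
  also have "\<dots> = (\<Sum>m\<in>insert 0 {1..n}. arsinh_coeff n m / real (2*m + 1) powi k)"
    by (rule sum.cong) auto
  also have "\<dots> = (\<Sum>m=1..n. (-4) ^ (n-m) / (real (2*m+1)) powi k * real_of_int (dstirling n m))"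
    using assms by (simp add: arsinh_coeff_eq_dstirling dstirling_def[of n 0])
  finally show ?thesis .
qed

end
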